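(* Let $R$ be a commutative ring with $1$, let $A,B\unlhd R$ be ideals, and let $n\ge 3$. Then $$ C_{\operatorname{GL}(n,R)}\Big(E(n,R,A),\big[E(n,R,(B:A)),E(n,R,A)\big]\Big)=C\big(n,R,(B:A)\big). $$
   Context: Commutators are left-normed: $[x,y]=xyx^{-1}y^{-1}$, and for subgroups $F,H$, $[F,H]$ is the subgroup generated by all $[f,h]$, $f\in F$, $h\in H$. For subgroups $F,H$ of a group $G$, the centraliser of $F$ modulo $H$ is $C_G(F,H)=\{g\in G\mid [f,g]\in H \text{ for all } f\in F\}$. For $\xi\in R$ and $1\le i\ne j\le n$, $t_{ij}(\xi)=e+\xi e_{ij}$. For an ideal $I$, $E(n,I)$ is the subgroup generated by all $t_{ij}(\xi)$, $\xi\in I$, $i\ne j$; $E(n,R)=E(n,R)$ with $I=R$ is the elementary group; and the relative elementary subgroup $E(n,R,I)$ is the normal closure of $E(n,I)$ in $E(n,R)$. The full congruence subgroup $C(n,R,I)$ is the set of $g\in\operatorname{GL}(n,R)$ whose image modulo $I$ is a scalar matrix $\lambda e$ with $\lambda\in (R/I)^*$, i.e. $g_{ij}\in I$ and $g_{ii}-g_{jj}\in I$ for all $i\ne j$. The ideal quotient is $(B:A)=\{x\in R\mid xA\subseteq B\}$. *)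

theory Defs
  imports "HOL-Analysis.Analysis"
begin

text \<open>Matrices over a commutative ring 'a, indexed by a finite type 'n (n = CARD('n)).\<close>

definition is_ideal :: "'a::comm_ring_1 set \<Rightarrow> bool" where
  "is_ideal I \<longleftrightarrow> 0 \<in> I \<and> (\<forall>x\<in>I. \<forall>y\<in>I. x + y \<in> I) \<and> (\<forall>r. \<forall>x\<in>I. r * x \<in> I)"

definition ideal_quot :: "'a::comm_ring_1 set \<Rightarrow> 'a set \<Rightarrow> 'a set" where
  "ideal_quot B A = {x. \<forall>a\<in>A. x * a \<in> B}"

definition GL :: "('a::comm_ring_1 ^'n::finite^'n) set" where
  "GL = {g. \<exists>h. g ** h = mat 1 \<and> h ** g = mat 1}"

definition minv :: "'a::comm_ring_1 ^'n::finite^'n \<Rightarrow> 'a^'n^'n" where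
  "minv g = (SOME h. g ** h = mat 1 \<and> h ** g = mat 1)"

definition mcomm :: "'a::comm_ring_1 ^'n::finite^'n \<Rightarrow> 'a^'n^'n \<Rightarrow> 'a^'n^'n" where
  "mcomm x y = x ** y ** minv x ** minv y"

inductive_set gen_subgroup :: "('a::comm_ring_1 ^'n::finite^'n) set \<Rightarrow> ('a^'n^'n) set"
  for S where
  one: "mat 1 \<in> gen_subgroup S"
| base: "s \<in> S \<Longrightarrow> s \<in> gen_subgroup S"
| mult: "x \<in> gen_subgroup S \<Longrightarrow> y \<in> gen_subgroup S \<Longrightarrow> x ** y \<in> gen_subgroup S"
| inv: "x \<in> gen_subgroup S \<Longrightarrow> minv x \<in> gen_subgroup S"

definition comm_subgroup :: "('a::comm_ring_1 ^'n::finite^'n) set \<Rightarrow> ('a^'n^'n) set \<Rightarrow> ('a^'n^'n) set" where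
  "comm_subgroup F H = gen_subgroup {mcomm f h | f h. f \<in> F \<and> h \<in> H}"

definition transvection :: "'n::finite \<Rightarrow> 'n \<Rightarrow> 'a::comm_ring_1 \<Rightarrow> 'a^'n^'n" where
  "transvection i j \<xi> = mat 1 + (\<chi> k l. if k = i \<and> l = j then \<xi> else 0)"

definition E_ideal :: "'a::comm_ring_1 set \<Rightarrow> ('a^'n::finite^'n) set" where
  "E_ideal I = gen_subgroup {transvection i j \<xi> | i j \<xi>. i \<noteq> j \<and> \<xi> \<in> I}"

definition E_rel :: "'a::comm_ring_1 set \<Rightarrow> ('a^'n::finite^'n) set" where
  "E_rel I = gen_subgroup {g ** x ** minv g | g x. g \<in> E_ideal UNIV \<and> x \<in> E_ideal I}"

definition centraliser_mod :: "('a::comm_ring_1 ^'n::finite^'n) set \<Rightarrow> ('a^'n^'n) set \<Rightarrow> ('a^'n^'n) set" where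
  "centraliser_mod F H = {g \<in> GL. \<forall>f\<in>F. mcomm f g \<in> H}"

definition full_congruence :: "'a::comm_ring_1 set \<Rightarrow> ('a^'n::finite^'n) set" where
  "full_congruence I = {g \<in> GL. \<forall>i j. i \<noteq> j \<longrightarrow> g$i$j \<in> I \<and> g$i$i - g$j$j \<in> I}"

end

theory Submission
  imports Defs
begin

text \<open>
  For arbitrary ideals \<open>I\<close>, \<open>J\<close> and \<open>n \<ge> 3\<close> one has
  \<open>[E(n,R,J), C(n,R,I)] \<subseteq> [E(n,R,I), E(n,R,J)]\<close>; with \<open>I = (B:A)\<close> and \<open>J = A\<close> this is the
  inclusion \<open>\<supseteq>\<close>. It suffices to treat \<open>[t\<^sub>i\<^sub>j(a), g]\<close> for \<open>a \<in> J\<close>, \<open>g \<in> C(n,R,I)\<close>.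
  With \<open>p\<close> the \<open>i\<close>-th column of \<open>g\<close> and \<open>u\<close> the \<open>j\<close>-th row of \<open>g\<^sup>-\<^sup>1\<close>, this commutator is
  \<open>t\<^sub>i\<^sub>j(a) (e - a p u)\<close> with \<open>u p = 0\<close>. Since \<open>u\<close> times the \<open>j\<close>-th column of \<open>g\<close> is \<open>1\<close>, the
  column \<open>p\<close> is a combination of the vectors \<open>u\<^sub>k e\<^sub>l - u\<^sub>l e\<^sub>k\<close> orthogonal to \<open>u\<close>, with all
  coefficients but one in \<open>I\<close>. Each factor \<open>e + v u\<close> with such a \<open>v\<close> is then written, using a
  third index \<open>h\<close>, as a product of commutators of elementary matrices; the exceptional factor
  absorbs \<open>t\<^sub>i\<^sub>j(a)\<close> because the diagonal of \<open>g\<close> is scalar modulo \<open>I\<close>.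

  For \<open>\<subseteq>\<close>: \<open>[E(n,R,B:A), E(n,R,A)]\<close> is contained in the principal congruence subgroup of level
  \<open>B\<close>, since \<open>(x - e)(y - e)\<close> has entries in \<open>(B:A)A \<subseteq> B\<close>. If \<open>g\<close> centralises \<open>E(n,R,A)\<close>
  modulo it, then \<open>t\<^sub>i\<^sub>j(a) g - g t\<^sub>i\<^sub>j(a)\<close> has entries in \<open>B\<close> for all \<open>a \<in> A\<close>, and reading off its
  \<open>(j,j)\<close> and \<open>(i,j)\<close> entries gives \<open>g \<in> C(n,R,B:A)\<close>.
\<close>

section \<open>Ideals\<close>

lemma ideal_zero: "is_ideal I \<Longrightarrow> 0 \<in> I"
  unfolding is_ideal_def by blast

lemma ideal_add: "is_ideal I \<Longrightarrow> x \<in> I \<Longrightarrow> y \<in> I \<Longrightarrow> x + y \<in> I"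
  unfolding is_ideal_def by blast

lemma ideal_mult_left: "is_ideal I \<Longrightarrow> x \<in> I \<Longrightarrow> r * x \<in> I"
  unfolding is_ideal_def by blast

lemma ideal_mult_right: "is_ideal I \<Longrightarrow> x \<in> I \<Longrightarrow> x * r \<in> I"
  unfolding is_ideal_def by (metis mult.commute)

lemma ideal_neg: "is_ideal I \<Longrightarrow> x \<in> I \<Longrightarrow> - x \<in> I"
  using ideal_mult_left[of I x "-1"] by simp

lemma ideal_diff: "is_ideal I \<Longrightarrow> x \<in> I \<Longrightarrow> y \<in> I \<Longrightarrow> x - y \<in> I"
  using ideal_add ideal_neg by (metis diff_conv_add_uminus)

lemma ideal_sum: "is_ideal I \<Longrightarrow> (\<And>x. x \<in> S \<Longrightarrow> f x \<in> I) \<Longrightarrow> sum f S \<in> I"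
  by (induction S rule: infinite_finite_induct) (auto intro: ideal_zero ideal_add)

lemma is_ideal_ideal_quot: "is_ideal B \<Longrightarrow> is_ideal (ideal_quot B A)"
  unfolding is_ideal_def ideal_quot_def by (auto simp: distrib_right mult.assoc)

section \<open>Rank-one perturbations of the identity\<close>

definition vdot :: "'a::comm_ring_1^'n::finite \<Rightarrow> 'a^'n \<Rightarrow> 'a" where
  "vdot w p = (\<Sum>k\<in>UNIV. w$k * p$k)"

definition outer_prod :: "'a::comm_ring_1^'n::finite \<Rightarrow> 'a^'n \<Rightarrow> 'a^'n^'n" where
  "outer_prod p w = (\<chi> i j. p$i * w$j)"

text \<open>\<open>esd p w = e + p w\<close> (column \<open>p\<close>, row \<open>w\<close>); for \<open>w p = 0\<close> this is an
  Eichler--Siegel--Dickson transvection, with inverse \<open>esd (-p) w\<close>.\<close>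
definition esd :: "'a::comm_ring_1^'n::finite \<Rightarrow> 'a^'n \<Rightarrow> 'a^'n^'n" where
  "esd p w = mat 1 + outer_prod p w"

lemma vdot_add_right: "vdot w (p1 + p2) = vdot w p1 + vdot w p2"
  by (simp add: vdot_def sum.distrib algebra_simps)

lemma vdot_minus_right: "vdot w (- p) = - vdot w p"
  by (simp add: vdot_def sum_negf)

lemma vdot_diff_left: "vdot (w1 - w2) p = vdot w1 p - vdot w2 p"
  by (simp add: vdot_def sum_subtractf algebra_simps)

lemma vdot_diff_right: "vdot w (p1 - p2) = vdot w p1 - vdot w p2"
  by (simp add: vdot_def sum_subtractf algebra_simps)

lemma vdot_scale_left: "vdot (c *s w) p = c * vdot w p"
  by (simp add: vdot_def sum_distrib_left algebra_simps)

lemma vdot_scale_right: "vdot w (c *s p) = c * vdot w p"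
  by (simp add: vdot_def sum_distrib_left algebra_simps)

lemma vdot_zero_left [simp]: "vdot 0 p = 0"
  and vdot_zero_right [simp]: "vdot w 0 = 0"
  by (simp_all add: vdot_def)

lemma vdot_sum_right: "vdot w (\<Sum>x\<in>S. f x) = (\<Sum>x\<in>S. vdot w (f x))"
  by (induction S rule: infinite_finite_induct) (simp_all add: vdot_add_right)

lemma vdot_axis_left: "vdot (axis i c) p = c * p$i"
proof -
  have "vdot (axis i c) p = (\<Sum>k\<in>UNIV. if k = i then c * p$k else 0)"
    unfolding vdot_def axis_def by (rule sum.cong) auto
  then show ?thesis by simp
qed

lemma vdot_axis_right: "vdot w (axis i c) = w$i * c"
proof -
  have "vdot w (axis i c) = (\<Sum>k\<in>UNIV. if k = i then w$k * c else 0)"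
    unfolding vdot_def axis_def by (rule sum.cong) auto
  then show ?thesis by simp
qed

lemma axis_nth_neq [simp]: "j \<noteq> i \<Longrightarrow> axis i x $ j = 0"
  by (simp add: axis_def)

lemma axis_zero [simp]: "axis i 0 = 0"
  by (simp add: axis_def vec_eq_iff)

lemma uminus_axis: "- axis i x = axis i (- x :: 'a::comm_ring_1)"
  by (simp add: vec_eq_iff axis_def)

lemma sum_axis_nth: "(\<Sum>m\<in>UNIV. axis m (p$m)) = (p::'a::comm_ring_1^'n::finite)"
proof -
  have "(\<Sum>m\<in>UNIV. axis m (p$m) $ k) = p$k" for k
  proof -
    have "(\<Sum>m\<in>UNIV. axis m (p$m) $ k) = (\<Sum>m\<in>UNIV. if m = k then p$k else 0)"
      by (rule sum.cong) (auto simp: axis_def)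
    then show ?thesis by simp
  qed
  then show ?thesis by (simp add: vec_eq_iff sum_component)
qed

lemma matrix_mult_add_rdistrib: "((X::'a::comm_ring_1^'n::finite^'n) + Y) ** Z = X ** Z + Y ** Z"
  by (simp add: matrix_matrix_mult_def vec_eq_iff sum.distrib algebra_simps)

lemma matrix_mult_diff_ldistrib: "(X::'a::comm_ring_1^'n::finite^'n) ** (Y - Z) = X ** Y - X ** Z"
  by (simp add: matrix_matrix_mult_def vec_eq_iff sum_subtractf algebra_simps)

lemma matrix_mult_diff_rdistrib: "((X::'a::comm_ring_1^'n::finite^'n) - Y) ** Z = X ** Z - Y ** Z"
  by (simp add: matrix_matrix_mult_def vec_eq_iff sum_subtractf algebra_simps)

lemma mat_left_nth: "(mat c ** (X::'a::comm_ring_1^'n::finite^'n))$k$l = c * X$k$l"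
proof -
  have "(mat c ** X)$k$l = (\<Sum>m\<in>UNIV. (if k = m then c else 0) * X$m$l)"
    by (simp add: matrix_matrix_mult_def mat_def)
  also have "\<dots> = (\<Sum>m\<in>UNIV. if m = k then c * X$k$l else 0)"
    by (rule sum.cong) auto
  finally show ?thesis by simp
qed

lemma mat_right_nth: "((X::'a::comm_ring_1^'n::finite^'n) ** mat c)$k$l = X$k$l * c"
proof -
  have "(X ** mat c)$k$l = (\<Sum>m\<in>UNIV. X$k$m * (if m = l then c else 0))"
    by (simp add: matrix_matrix_mult_def mat_def)
  also have "\<dots> = (\<Sum>m\<in>UNIV. if m = l then X$k$l * c else 0)"
    by (rule sum.cong) auto
  finally show ?thesis by simp
qed

lemma matrix_mult_mat_commute: "(X::'a::comm_ring_1^'n::finite^'n) ** mat c = mat c ** X"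
  by (simp add: vec_eq_iff mat_left_nth mat_right_nth mult.commute)

lemma matrix_vector_mult_axis: "(X::'a::comm_ring_1^'n::finite^'m) *v axis i x = x *s (\<chi> k. X$k$i)"
proof -
  have "(\<Sum>j\<in>UNIV. X$k$j * axis i x $ j) = x * X$k$i" for k
  proof -
    have "(\<Sum>j\<in>UNIV. X$k$j * axis i x $ j) = (\<Sum>j\<in>UNIV. if j = i then x * X$k$i else 0)"
      by (rule sum.cong) (auto simp: axis_def mult.commute)
    then show ?thesis by simp
  qed
  then show ?thesis by (simp add: matrix_vector_mult_def vector_scalar_mult_def vec_eq_iff)
qed

lemma axis_vector_matrix_mult: "axis j x v* (X::'a::comm_ring_1^'n::finite^'m::finite) = x *s (X$j)"
proof -
  have "(\<Sum>i\<in>UNIV. axis j x $ i * X$i$k) = x * X$j$k" for k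
  proof -
    have "(\<Sum>i\<in>UNIV. axis j x $ i * X$i$k) = (\<Sum>i\<in>UNIV. if i = j then x * X$j$k else 0)"
      by (rule sum.cong) (auto simp: axis_def)
    then show ?thesis by simp
  qed
  then show ?thesis by (simp add: vector_matrix_mult_def vector_scalar_mult_def vec_eq_iff)
qed

lemma outer_prod_mult: "outer_prod p1 w1 ** outer_prod p2 w2 = outer_prod (vdot w1 p2 *s p1) w2"
  by (simp add: outer_prod_def matrix_matrix_mult_def vdot_def vec_eq_iff vector_scalar_mult_def
      sum_distrib_left sum_distrib_right algebra_simps)

lemma outer_prod_add_left: "outer_prod (p1 + p2) w = outer_prod p1 w + outer_prod p2 w"
  by (simp add: outer_prod_def vec_eq_iff algebra_simps)

lemma outer_prod_add_right: "outer_prod p (w1 + w2) = outer_prod p w1 + outer_prod p w2"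
  by (simp add: outer_prod_def vec_eq_iff algebra_simps)

lemma outer_prod_zero_left [simp]: "outer_prod 0 w = 0"
  and outer_prod_zero_right [simp]: "outer_prod p 0 = 0"
  by (simp_all add: outer_prod_def vec_eq_iff)

lemma matrix_mult_outer_prod: "g ** outer_prod p w = outer_prod (g *v p) w"
  unfolding outer_prod_def matrix_matrix_mult_def matrix_vector_mult_def vec_eq_iff
  by (simp add: sum_distrib_right mult.assoc)

lemma outer_prod_matrix_mult: "outer_prod p w ** g = outer_prod p (w v* g)"
  unfolding outer_prod_def matrix_matrix_mult_def vector_matrix_mult_def vec_eq_iff
  by (simp add: sum_distrib_left mult.assoc mult.left_commute)

lemma outer_prod_mult_vector: "outer_prod p w *v v = vdot w v *s p"
  unfolding outer_prod_def matrix_vector_mult_def vdot_def vec_eq_iff vector_scalar_mult_def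
  by (simp add: sum_distrib_left sum_distrib_right mult.assoc mult.left_commute mult.commute)

lemma vector_mult_outer_prod: "v v* outer_prod p w = vdot v p *s w"
  unfolding outer_prod_def vector_matrix_mult_def vdot_def vec_eq_iff vector_scalar_mult_def
  by (simp add: sum_distrib_left sum_distrib_right mult.assoc mult.left_commute mult.commute)

lemma esd_zero_left [simp]: "esd 0 w = mat 1"
  and esd_zero_right [simp]: "esd p 0 = mat 1"
  by (simp_all add: esd_def)

lemma esd_scale: "esd (c *s p) (d *s w) = esd ((c * d) *s p) w"
  by (simp add: esd_def outer_prod_def vector_scalar_mult_def vec_eq_iff algebra_simps)

lemma esd_axis_axis: "esd (axis i \<alpha>) (axis j \<beta>) = transvection i j (\<alpha> * \<beta>)"
  unfolding transvection_def esd_def outer_prod_def axis_def by (simp add: vec_eq_iff)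

lemma transvection_eq_esd: "transvection i j \<xi> = esd (axis i \<xi>) (axis j 1)"
  by (simp add: esd_axis_axis)

lemma esd_mult_orth:
  "vdot w1 p2 = 0 \<Longrightarrow> esd p1 w1 ** esd p2 w2 = mat 1 + outer_prod p1 w1 + outer_prod p2 w2"
  by (simp add: esd_def matrix_add_ldistrib matrix_mult_add_rdistrib outer_prod_mult algebra_simps)

lemma esd_mult_same_row: "vdot w p2 = 0 \<Longrightarrow> esd p1 w ** esd p2 w = esd (p1 + p2) w"
  by (subst esd_mult_orth) (simp_all add: esd_def outer_prod_add_left algebra_simps)

lemma esd_mult_same_col: "vdot w1 p = 0 \<Longrightarrow> esd p w1 ** esd p w2 = esd p (w1 + w2)"
  by (subst esd_mult_orth) (simp_all add: esd_def outer_prod_add_right algebra_simps)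

lemma esd_mult_vector: "esd p w *v v = v + vdot w v *s p"
  by (simp add: esd_def matrix_vector_mult_add_rdistrib outer_prod_mult_vector)

lemma vector_mult_esd: "v v* esd p w = v + vdot v p *s w"
  by (simp add: esd_def vector_matrix_mult_add_rdistrib vector_mult_outer_prod)

lemma conj_esd:
  fixes g g' :: "'a::comm_ring_1^'n::finite^'n"
  assumes "g ** g' = mat 1"
  shows "g ** esd p w ** g' = esd (g *v p) (w v* g')"
proof -
  have "g ** esd p w ** g' = g ** g' + (g ** outer_prod p w) ** g'"
    unfolding esd_def matrix_add_ldistrib matrix_mult_add_rdistrib by simp
  also have "\<dots> = esd (g *v p) (w v* g')"
    using assms by (simp add: esd_def matrix_mult_outer_prod outer_prod_matrix_mult)
  finally show ?thesis .
qed

section \<open>The general linear group\<close>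

lemma minv_unique:
  fixes g h :: "'a::comm_ring_1^'n::finite^'n"
  assumes "g ** h = mat 1" "h ** g = mat 1"
  shows "minv g = h"
proof -
  have inv: "g ** minv g = mat 1 \<and> minv g ** g = mat 1"
    unfolding minv_def by (rule someI) (use assms in blast)
  have "minv g = minv g ** (g ** h)" using assms by simp
  also have "\<dots> = (minv g ** g) ** h" by (simp add: matrix_mul_assoc)
  finally show ?thesis using inv by simp
qed

lemma GL_minv_right: "g \<in> GL \<Longrightarrow> g ** minv g = mat 1"
  and GL_minv_left: "g \<in> GL \<Longrightarrow> minv g ** g = mat 1"
  unfolding GL_def using minv_unique by blast+

lemma GL_minv: "g \<in> GL \<Longrightarrow> minv g \<in> GL"
  using GL_minv_left GL_minv_right unfolding GL_def by blast

lemma GL_minv_minv: "g \<in> GL \<Longrightarrow> minv (minv g) = g"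
  by (simp add: minv_unique GL_minv_left GL_minv_right)

lemma GL_mult:
  assumes "g \<in> GL" "h \<in> GL"
  shows "g ** h \<in> GL"
proof -
  have "(g ** h) ** (minv h ** minv g) = mat 1" "(minv h ** minv g) ** (g ** h) = mat 1"
    by (metis GL_minv_left GL_minv_right assms matrix_mul_assoc matrix_mul_rid)+
  then show ?thesis unfolding GL_def by blast
qed

lemma GL_minv_mult: "g \<in> GL \<Longrightarrow> h \<in> GL \<Longrightarrow> minv (g ** h) = minv h ** minv g"
  by (rule minv_unique) (metis GL_minv_left GL_minv_right matrix_mul_assoc matrix_mul_rid)+

lemma GL_one [simp]: "mat 1 \<in> GL"
  unfolding GL_def by (auto intro!: exI[of _ "mat 1"])

lemma minv_one [simp]: "minv (mat 1 :: 'a::comm_ring_1^'n::finite^'n) = mat 1"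
  by (rule minv_unique) simp_all

lemma GL_mult_minv_cancel: "g \<in> GL \<Longrightarrow> X ** g ** minv g = X"
  and GL_minv_mult_cancel: "g \<in> GL \<Longrightarrow> X ** minv g ** g = X"
  by (metis GL_minv_left GL_minv_right matrix_mul_assoc matrix_mul_rid)+

lemmas GL_simps = GL_mult_minv_cancel GL_minv_mult_cancel GL_minv_right GL_minv_left
  GL_minv_mult GL_minv_minv GL_minv GL_mult matrix_mul_assoc

lemma mcomm_GL: "x \<in> GL \<Longrightarrow> y \<in> GL \<Longrightarrow> mcomm x y \<in> GL"
  unfolding mcomm_def by (simp add: GL_mult GL_minv)

lemma minv_mcomm: "x \<in> GL \<Longrightarrow> y \<in> GL \<Longrightarrow> minv (mcomm x y) = mcomm y x"
  unfolding mcomm_def by (simp add: GL_simps)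

lemma conj_mcomm: "g \<in> GL \<Longrightarrow> x \<in> GL \<Longrightarrow> y \<in> GL \<Longrightarrow>
   g ** mcomm x y ** minv g = mcomm (g ** x ** minv g) (g ** y ** minv g)"
  unfolding mcomm_def by (simp add: GL_simps)

lemma mcomm_mult_mult:
  assumes "x1 \<in> GL" "x2 \<in> GL" "y1 \<in> GL" "y2 \<in> GL"
  shows "mcomm (x1 ** x2) (y1 ** y2) = x1 ** mcomm x2 y1 ** (y1 ** mcomm x2 y2 ** minv y1)
           ** ((y1 ** y2) ** minv x1 ** minv (y1 ** y2))"
  using assms unfolding mcomm_def by (simp add: GL_simps)

lemma gen_subgroup_GL: "x \<in> gen_subgroup S \<Longrightarrow> S \<subseteq> GL \<Longrightarrow> x \<in> GL"
  by (induction x rule: gen_subgroup.induct) (auto intro: GL_mult GL_minv)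

lemma esd_minv_left: "vdot w p = 0 \<Longrightarrow> esd (- p) w ** esd p w = mat 1"
  and esd_minv_right: "vdot w p = 0 \<Longrightarrow> esd p w ** esd (- p) w = mat 1"
  by (simp_all add: esd_mult_same_row vdot_minus_right)

lemma minv_esd: "vdot w p = 0 \<Longrightarrow> minv (esd p w) = esd (- p) w"
  by (simp add: minv_unique esd_minv_left esd_minv_right)

lemma esd_GL: "vdot w p = 0 \<Longrightarrow> esd p w \<in> GL"
  unfolding GL_def using esd_minv_left esd_minv_right by blast

lemma mcomm_esd_esd:
  assumes "p$h = 0" "w$h = 0" "vdot w p = 0"
  shows "mcomm (esd p (axis h 1)) (esd (axis h 1) w) = esd p w"
proof -
  let ?x = "esd p (axis h 1)" and ?y = "esd (axis h 1) w"
  have hp: "vdot (axis h 1) p = 0" and wh: "vdot w (axis h 1) = 0"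
    using assms by (simp_all add: vdot_axis_left vdot_axis_right)
  have "?x ** ?y ** minv ?x = esd (?x *v axis h 1) (w v* esd (- p) (axis h 1))"
    using hp by (simp add: minv_esd conj_esd esd_minv_right)
  also have "\<dots> = esd (axis h 1 + p) w"
    using assms by (simp add: esd_mult_vector vector_mult_esd vdot_axis_left vdot_minus_right)
  finally have "mcomm ?x ?y = esd (axis h 1 + p) w ** esd (- axis h 1) w"
    unfolding mcomm_def using wh by (simp add: minv_esd)
  also have "\<dots> = esd p w"
    using wh by (simp add: esd_mult_same_row vdot_minus_right)
  finally show ?thesis .
qed

lemma transvection_GL: "i \<noteq> j \<Longrightarrow> transvection i j \<xi> \<in> GL"
  unfolding transvection_eq_esd by (rule esd_GL) (simp add: vdot_axis_left)

lemma minv_transvection: "i \<noteq> j \<Longrightarrow> minv (transvection i j x) = transvection i j (- x)"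
  by (simp add: transvection_eq_esd minv_esd vdot_axis_left uminus_axis)

lemma transvection_mult_transvection:
  assumes "i \<noteq> j"
  shows "transvection i j x ** transvection i j y = transvection i j (x + y)"
proof -
  have "axis i x + axis i y = axis i (x + y)"
    by (simp add: vec_eq_iff axis_def)
  then show ?thesis
    using assms by (simp add: transvection_eq_esd esd_mult_same_row vdot_axis_left)
qed

lemma mcomm_transvection_transvection:
  assumes "i \<noteq> h" "h \<noteq> j" "i \<noteq> j"
  shows "mcomm (transvection i h \<alpha>) (transvection h j \<beta>) = transvection i j (\<alpha> * \<beta>)"
proof -
  have "mcomm (esd (axis i \<alpha>) (axis h 1)) (esd (axis h 1) (axis j \<beta>)) = esd (axis i \<alpha>) (axis j \<beta>)"
    by (rule mcomm_esd_esd) (use assms in \<open>simp_all add: vdot_axis_left\<close>)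
  then show ?thesis by (simp add: esd_axis_axis)
qed

lemma conj_transvection_by_row_esd:
  assumes "w$h = 0" "h \<noteq> j" "i \<noteq> j"
  shows "esd (axis h 1) w ** transvection i j \<gamma> ** minv (esd (axis h 1) w)
           = transvection i j \<gamma> ** transvection h j (w$i * \<gamma>)"
proof -
  let ?y = "esd (axis h 1) w"
  have wh: "vdot w (axis h 1) = 0" using assms by (simp add: vdot_axis_right)
  have "?y ** transvection i j \<gamma> ** minv ?y = esd (?y *v axis i \<gamma>) (axis j 1 v* minv ?y)"
    unfolding transvection_eq_esd using wh by (simp add: conj_esd esd_minv_right minv_esd)
  also have "?y *v axis i \<gamma> = axis i \<gamma> + axis h (w$i * \<gamma>)"
    unfolding esd_mult_vector vdot_axis_right
    by (simp add: vec_eq_iff axis_def vector_scalar_mult_def)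
  also have "axis j 1 v* minv ?y = axis j 1"
    using wh assms by (simp add: minv_esd vector_mult_esd vdot_axis_left)
  also have "esd (axis i \<gamma> + axis h (w$i * \<gamma>)) (axis j 1)
      = transvection i j \<gamma> ** transvection h j (w$i * \<gamma>)"
    using assms by (simp add: transvection_eq_esd esd_mult_same_row vdot_axis_left)
  finally show ?thesis .
qed

text \<open>In \<open>[x\<^sub>1 x\<^sub>2, y\<^sub>1 y\<^sub>2]\<close> the factor \<open>[x\<^sub>2, y\<^sub>2] = t\<^sub>i\<^sub>j(\<gamma>)\<close> need not be a mixed commutator;
  it is merged with \<open>t\<^sub>i\<^sub>j(a)\<close> into \<open>t\<^sub>i\<^sub>j(a + \<gamma>)\<close> instead.\<close>
lemma transvection_mult_mcomm_mult_mult: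
  assumes GL: "x1 \<in> GL" "x2 \<in> GL" "y1 \<in> GL" "y2 \<in> GL" and ij: "i \<noteq> j"
    and x2y2: "mcomm x2 y2 = transvection i j \<gamma>"
    and y1: "y1 ** transvection i j \<gamma> ** minv y1 = transvection i j \<gamma> ** z"
  shows "transvection i j a ** mcomm (x1 ** x2) (y1 ** y2)
           = (transvection i j a ** (x1 ** mcomm x2 y1) ** minv (transvection i j a))
             ** transvection i j (a + \<gamma>) ** z ** ((y1 ** y2) ** minv x1 ** minv (y1 ** y2))"
proof -
  have "transvection i j a ** x1 ** mcomm x2 y1 ** transvection i j \<gamma>
      = (transvection i j a ** (x1 ** mcomm x2 y1) ** minv (transvection i j a)) ** transvection i j (a + \<gamma>)"
    using ij by (simp add: minv_transvection transvection_mult_transvection matrix_mul_assoc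
        flip: matrix_mul_assoc)
  then show ?thesis
    using GL x2y2 y1 by (simp add: mcomm_mult_mult matrix_mul_assoc)
qed

lemma exists_third_index:
  fixes i j :: "'n::finite"
  assumes "CARD('n) \<ge> 3"
  obtains h :: 'n where "h \<noteq> i" "h \<noteq> j"
proof -
  have "\<not> (UNIV :: 'n set) \<subseteq> {i, j}"
  proof
    assume "(UNIV :: 'n set) \<subseteq> {i, j}"
    then have "CARD('n) \<le> card {i, j}" by (rule card_mono[rotated]) simp
    also have "\<dots> \<le> 2" by (simp add: card_insert_le_m1)
    finally show False using assms by simp
  qed
  then show ?thesis using that by blast
qed

section \<open>Elementary subgroups and their mixed commutator subgroup\<close>

lemma transvection_E_ideal: "i \<noteq> j \<Longrightarrow> \<xi> \<in> I \<Longrightarrow> transvection i j \<xi> \<in> E_ideal I"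
  unfolding E_ideal_def by (rule gen_subgroup.base) blast

lemma E_ideal_one: "mat 1 \<in> E_ideal I"
  and E_ideal_mult: "x \<in> E_ideal I \<Longrightarrow> y \<in> E_ideal I \<Longrightarrow> x ** y \<in> E_ideal I"
  and E_ideal_minv: "x \<in> E_ideal I \<Longrightarrow> minv x \<in> E_ideal I"
  unfolding E_ideal_def by (fact gen_subgroup.intros)+

lemma E_ideal_GL: "x \<in> E_ideal I \<Longrightarrow> x \<in> GL"
  unfolding E_ideal_def by (erule gen_subgroup_GL) (auto intro: transvection_GL)

lemma gen_subgroup_subset: "x \<in> gen_subgroup S \<Longrightarrow> S \<subseteq> gen_subgroup T \<Longrightarrow> x \<in> gen_subgroup T"
  by (induction x rule: gen_subgroup.induct) (auto intro: gen_subgroup.intros)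

lemma E_ideal_subset_E_UNIV: "x \<in> E_ideal I \<Longrightarrow> x \<in> E_ideal UNIV"
  unfolding E_ideal_def by (erule gen_subgroup_subset) (auto intro: gen_subgroup.base)

lemma E_ideal_E_rel: "x \<in> E_ideal I \<Longrightarrow> x \<in> E_rel I"
  unfolding E_rel_def
proof (rule gen_subgroup.base)
  assume "x \<in> E_ideal I"
  then have "x = mat 1 ** x ** minv (mat 1) \<and> mat 1 \<in> E_ideal UNIV \<and> x \<in> E_ideal I"
    by (simp add: E_ideal_one)
  then show "x \<in> {g ** x ** minv g |g x. g \<in> E_ideal UNIV \<and> x \<in> E_ideal I}" by blast
qed

lemma E_rel_GL: "x \<in> E_rel I \<Longrightarrow> x \<in> GL"
  unfolding E_rel_def by (erule gen_subgroup_GL) (auto intro!: GL_mult GL_minv intro: E_ideal_GL)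

lemma gen_subgroup_conj_closed:
  assumes x: "x \<in> gen_subgroup S" and g: "g \<in> GL"
    and S: "\<And>s. s \<in> S \<Longrightarrow> g ** s ** minv g \<in> gen_subgroup S" "S \<subseteq> GL"
  shows "g ** x ** minv g \<in> gen_subgroup S"
  using x
proof (induction x rule: gen_subgroup.induct)
  case one
  then show ?case using g by (simp add: GL_simps gen_subgroup.one)
next
  case (base s)
  then show ?case by (rule S)
next
  case (mult x y)
  have "g ** (x ** y) ** minv g = (g ** x ** minv g) ** (g ** y ** minv g)"
    using g by (simp add: GL_simps)
  then show ?case using mult by (simp add: gen_subgroup.mult)
next
  case (inv x)
  have "g ** minv x ** minv g = minv (g ** x ** minv g)"
    using g gen_subgroup_GL[OF inv(1) S(2)] by (simp add: GL_simps)
  then show ?case using inv by (simp add: gen_subgroup.inv)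
qed

lemma E_rel_conj:
  fixes g :: "'a::comm_ring_1^'n::finite^'n"
  assumes g: "g \<in> E_ideal UNIV" and x: "x \<in> E_rel I"
  shows "g ** x ** minv g \<in> E_rel I"
  using x unfolding E_rel_def
proof (rule gen_subgroup_conj_closed)
  show "g \<in> GL" using g by (rule E_ideal_GL)
  show "{g ** x ** minv g |g x. g \<in> E_ideal UNIV \<and> x \<in> E_ideal I} \<subseteq> GL"
    by (auto intro!: GL_mult GL_minv intro: E_ideal_GL)
  fix s :: "'a^'n^'n" assume "s \<in> {g ** x ** minv g |g x. g \<in> E_ideal UNIV \<and> x \<in> E_ideal I}"
  then obtain g0 x0 where s: "s = g0 ** x0 ** minv g0" "g0 \<in> E_ideal UNIV" "x0 \<in> E_ideal I"
    by blast
  have "g ** s ** minv g = (g ** g0) ** x0 ** minv (g ** g0)"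
    using g s by (simp add: E_ideal_GL GL_simps)
  moreover have "g ** g0 \<in> E_ideal UNIV" using g s(2) by (rule E_ideal_mult)
  ultimately show "g ** s ** minv g \<in> gen_subgroup {g ** x ** minv g |g x. g \<in> E_ideal UNIV \<and> x \<in> E_ideal I}"
    using s(3) by (auto intro!: gen_subgroup.base)
qed

lemma comm_subgroup_one: "mat 1 \<in> comm_subgroup F H"
  and comm_subgroup_mult:
    "x \<in> comm_subgroup F H \<Longrightarrow> y \<in> comm_subgroup F H \<Longrightarrow> x ** y \<in> comm_subgroup F H"
  and comm_subgroup_minv: "x \<in> comm_subgroup F H \<Longrightarrow> minv x \<in> comm_subgroup F H"
  unfolding comm_subgroup_def by (fact gen_subgroup.intros)+

lemma mcomm_comm_subgroup: "f \<in> F \<Longrightarrow> h \<in> H \<Longrightarrow> mcomm f h \<in> comm_subgroup F H"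
  unfolding comm_subgroup_def by (rule gen_subgroup.base) blast

lemma mcomm_comm_subgroup_swap:
  assumes "k \<in> E_rel J" "f \<in> E_rel I"
  shows "mcomm k f \<in> comm_subgroup (E_rel I) (E_rel J)"
proof -
  have "minv (mcomm f k) \<in> comm_subgroup (E_rel I) (E_rel J)"
    using assms by (intro comm_subgroup_minv mcomm_comm_subgroup)
  then show ?thesis using assms by (simp add: minv_mcomm E_rel_GL)
qed

lemma comm_subgroup_E_rel_conj:
  fixes g :: "'a::comm_ring_1^'n::finite^'n"
  assumes g: "g \<in> E_ideal UNIV" and x: "x \<in> comm_subgroup (E_rel I) (E_rel J)"
  shows "g ** x ** minv g \<in> comm_subgroup (E_rel I) (E_rel J)"
  using x unfolding comm_subgroup_def
proof (rule gen_subgroup_conj_closed)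
  show "g \<in> GL" using g by (rule E_ideal_GL)
  show "{mcomm f h |f h. f \<in> E_rel I \<and> h \<in> E_rel J} \<subseteq> GL"
    by (auto intro: mcomm_GL E_rel_GL)
  fix s :: "'a^'n^'n" assume "s \<in> {mcomm f h |f h. f \<in> E_rel I \<and> h \<in> E_rel J}"
  then obtain f k where s: "s = mcomm f k" "f \<in> E_rel I" "k \<in> E_rel J" by blast
  have "g ** s ** minv g = mcomm (g ** f ** minv g) (g ** k ** minv g)"
    using g s by (simp add: conj_mcomm E_rel_GL E_ideal_GL)
  then show "g ** s ** minv g \<in> gen_subgroup {mcomm f h |f h. f \<in> E_rel I \<and> h \<in> E_rel J}"
    using s g by (auto intro!: gen_subgroup.base E_rel_conj)
qed

lemma transvection_comm_subgroup:
  fixes i j :: "'n::finite"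
  assumes "CARD('n) \<ge> 3" "i \<noteq> j" "q \<in> I" "a \<in> J"
  shows "(transvection i j (a * q) :: 'a::comm_ring_1^'n^'n) \<in> comm_subgroup (E_rel I) (E_rel J)"
proof -
  obtain h :: 'n where h: "h \<noteq> i" "h \<noteq> j" using exists_third_index[OF assms(1)] by blast
  have "mcomm (transvection i h q) (transvection h j a) = (transvection i j (q * a) :: 'a^'n^'n)"
    using h assms by (intro mcomm_transvection_transvection) auto
  moreover have "mcomm (transvection i h q) (transvection h j a) \<in> comm_subgroup (E_rel I) (E_rel J)"
    using h assms by (intro mcomm_comm_subgroup E_ideal_E_rel transvection_E_ideal) auto
  ultimately show ?thesis by (simp add: mult.commute)
qed

lemma esd_sum_col_mem:
  assumes "mat 1 \<in> M" "\<And>x y. x \<in> M \<Longrightarrow> y \<in> M \<Longrightarrow> x ** y \<in> M"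
    and "\<And>x. x \<in> S \<Longrightarrow> vdot w (f x) = 0" "\<And>x. x \<in> S \<Longrightarrow> esd (f x) w \<in> M"
  shows "esd (\<Sum>x\<in>S. f x) w \<in> M"
  using assms(3,4)
proof (induction S rule: infinite_finite_induct)
  case (insert x F)
  have "esd (\<Sum>x\<in>insert x F. f x) w = esd (f x) w ** esd (\<Sum>x\<in>F. f x) w"
    using insert by (simp add: esd_mult_same_row vdot_sum_right)
  then show ?case using insert assms(2) by simp
qed (use assms(1) in simp_all)

lemma esd_sum_row_mem:
  assumes "mat 1 \<in> M" "\<And>x y. x \<in> M \<Longrightarrow> y \<in> M \<Longrightarrow> x ** y \<in> M"
    and "\<And>x. x \<in> S \<Longrightarrow> vdot (f x) p = 0" "\<And>x. x \<in> S \<Longrightarrow> esd p (f x) \<in> M"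
  shows "esd p (\<Sum>x\<in>S. f x) \<in> M"
  using assms(3,4)
proof (induction S rule: infinite_finite_induct)
  case (insert x F)
  have "esd p (\<Sum>x\<in>insert x F. f x) = esd p (f x) ** esd p (\<Sum>x\<in>F. f x)"
    using insert by (simp add: esd_mult_same_col)
  then show ?case using insert assms(2) by simp
qed (use assms(1) in simp_all)

lemma esd_col_E_ideal:
  assumes "p$h = 0" "\<And>m. p$m \<in> I"
  shows "esd p (axis h 1) \<in> E_ideal I"
proof -
  have "esd (\<Sum>m\<in>UNIV. axis m (p$m)) (axis h 1) \<in> E_ideal I"
  proof (rule esd_sum_col_mem[OF E_ideal_one E_ideal_mult])
    show "vdot (axis h 1) (axis m (p$m)) = 0" for m
      using assms by (cases "m = h") (simp_all add: vdot_axis_left)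
    show "esd (axis m (p$m)) (axis h 1) \<in> E_ideal I" for m
      using assms by (cases "m = h") (simp_all add: E_ideal_one esd_axis_axis transvection_E_ideal)
  qed
  then show ?thesis by (simp add: sum_axis_nth)
qed

lemma esd_row_E_ideal:
  assumes "w$h = 0" "\<And>m. w$m \<in> I"
  shows "esd (axis h 1) w \<in> E_ideal I"
proof -
  have "esd (axis h 1) (\<Sum>m\<in>UNIV. axis m (w$m)) \<in> E_ideal I"
  proof (rule esd_sum_row_mem[OF E_ideal_one E_ideal_mult])
    show "vdot (axis m (w$m)) (axis h 1) = 0" for m
      using assms by (cases "m = h") (simp_all add: vdot_axis_left)
    show "esd (axis h 1) (axis m (w$m)) \<in> E_ideal I" for m
      using assms by (cases "m = h") (simp_all add: E_ideal_one esd_axis_axis transvection_E_ideal)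
  qed
  then show ?thesis by (simp add: sum_axis_nth)
qed

section \<open>Congruence subgroups\<close>

definition entries_in :: "'a::comm_ring_1 set \<Rightarrow> 'a^'n::finite^'n \<Rightarrow> bool" where
  "entries_in I X \<longleftrightarrow> (\<forall>k l. X$k$l \<in> I)"

definition principal_congruence :: "'a::comm_ring_1 set \<Rightarrow> ('a^'n::finite^'n) set" where
  "principal_congruence I = {g \<in> GL. entries_in I (g - mat 1)}"

lemma entries_in_add: "is_ideal I \<Longrightarrow> entries_in I X \<Longrightarrow> entries_in I Y \<Longrightarrow> entries_in I (X + Y)"
  unfolding entries_in_def by (auto intro: ideal_add)

lemma entries_in_diff: "is_ideal I \<Longrightarrow> entries_in I X \<Longrightarrow> entries_in I Y \<Longrightarrow> entries_in I (X - Y)"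
  unfolding entries_in_def by (auto intro: ideal_diff)

lemma entries_in_mult_left: "is_ideal I \<Longrightarrow> entries_in I Y \<Longrightarrow> entries_in I (X ** Y)"
  unfolding entries_in_def matrix_matrix_mult_def by (auto intro!: ideal_sum ideal_mult_left)

lemma entries_in_mult_right: "is_ideal I \<Longrightarrow> entries_in I X \<Longrightarrow> entries_in I (X ** Y)"
  unfolding entries_in_def matrix_matrix_mult_def by (auto intro!: ideal_sum ideal_mult_right)

lemma entries_in_mult_ideal_quot:
  assumes "is_ideal B" "entries_in (ideal_quot B A) X" "entries_in A Y"
  shows "entries_in B (X ** Y)" "entries_in B (Y ** X)"
  using assms unfolding entries_in_def matrix_matrix_mult_def ideal_quot_def
  by (auto intro!: ideal_sum) (metis mult.commute)+

lemma full_congruence_GL: "g \<in> full_congruence I \<Longrightarrow> g \<in> GL"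
  by (simp add: full_congruence_def)

lemma full_congruence_entries_in:
  assumes "is_ideal I" "g \<in> full_congruence I"
  shows "entries_in I (g - mat (g$k$k))"
  unfolding entries_in_def
proof (intro allI)
  fix i j
  show "(g - mat (g$k$k))$i$j \<in> I"
    using assms by (cases "i = j"; cases "i = k") (auto simp: full_congruence_def mat_def ideal_zero)
qed

lemma full_congruence_intro:
  fixes g :: "'a::comm_ring_1^'n::finite^'n"
  assumes "is_ideal I" "g \<in> GL" "entries_in I (g - mat c)"
  shows "g \<in> full_congruence I"
  unfolding full_congruence_def
proof (intro CollectI conjI allI impI \<open>g \<in> GL\<close>)
  fix i j :: 'n assume "i \<noteq> j"
  moreover have "(g - mat c)$i$j \<in> I" using assms(3) unfolding entries_in_def by blast
  ultimately show "g$i$j \<in> I" by (simp add: mat_def)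
  have "(g - mat c)$i$i - (g - mat c)$j$j \<in> I"
    using assms(1,3) unfolding entries_in_def by (blast intro: ideal_diff)
  then show "g$i$i - g$j$j \<in> I" by (simp add: mat_def)
qed

lemma full_congruence_conj:
  assumes "is_ideal I" "x \<in> GL" "g \<in> full_congruence I"
  shows "x ** g ** minv x \<in> full_congruence I"
proof -
  let ?c = "g$k$k"
  have "x ** g ** minv x - mat ?c = x ** (g - mat ?c) ** minv x"
    using assms(2) by (simp add: matrix_mult_diff_ldistrib matrix_mult_diff_rdistrib matrix_mult_mat_commute GL_simps)
  moreover have "entries_in I (x ** (g - mat ?c) ** minv x)"
    using full_congruence_entries_in[OF assms(1,3)] assms(1)
    by (intro entries_in_mult_left entries_in_mult_right)
  ultimately show ?thesis
    using assms by (intro full_congruence_intro[of _ _ ?c]) (simp_all add: full_congruence_GL GL_simps)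
qed

text \<open>The scalar \<open>c\<close> with \<open>g \<equiv> c e\<close> is a unit modulo \<open>I\<close>, so the congruence \<open>c g\<^sup>-\<^sup>1 \<equiv> e\<close>
  can be divided by \<open>c\<close>.\<close>
lemma full_congruence_minv:
  fixes g :: "'a::comm_ring_1^'n::finite^'n"
  assumes I: "is_ideal I" and g: "g \<in> full_congruence I"
  shows "minv g \<in> full_congruence I"
proof -
  let ?c = "g$k$k" and ?G = "minv g"
  have gG: "g \<in> GL" using g by (rule full_congruence_GL)
  have GN: "entries_in I (?G ** (g - mat ?c))"
    using I full_congruence_entries_in[OF I g] by (rule entries_in_mult_left)
  have eq: "?G ** (g - mat ?c) = mat 1 - mat ?c ** ?G"
    using gG by (simp add: matrix_mult_diff_ldistrib GL_simps matrix_mult_mat_commute)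
  have entry: "?c * ?G$i$j = (if i = j then 1 else 0) - (?G ** (g - mat ?c))$i$j" for i j
  proof -
    have "(?G ** (g - mat ?c))$i$j = (mat 1 - mat ?c ** ?G)$i$j" using eq by simp
    also have "\<dots> = (mat 1 :: 'a^'n^'n)$i$j - ?c * ?G$i$j" by (simp add: mat_left_nth)
    finally show ?thesis by (simp add: mat_def)
  qed
  have unit: "1 - ?c * ?G$k$k \<in> I"
    using entry[of k k] GN unfolding entries_in_def by simp
  have cancel: "d \<in> I" if "?c * d \<in> I" for d
  proof -
    have "d = (1 - ?c * ?G$k$k) * d + ?G$k$k * (?c * d)" by (simp add: algebra_simps)
    moreover have "(1 - ?c * ?G$k$k) * d \<in> I" using I unit by (rule ideal_mult_right)
    moreover have "?G$k$k * (?c * d) \<in> I" using I that by (rule ideal_mult_left)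
    ultimately show ?thesis using I ideal_add by metis
  qed
  show ?thesis unfolding full_congruence_def
  proof (intro CollectI conjI allI impI GL_minv gG)
    fix i j :: 'n assume "i \<noteq> j"
    then have "?c * ?G$i$j = - (?G ** (g - mat ?c))$i$j" using entry[of i j] by simp
    then have "?c * ?G$i$j \<in> I"
      using GN I ideal_neg unfolding entries_in_def by metis
    then show "?G$i$j \<in> I" by (rule cancel)
    have "?c * (?G$i$i - ?G$j$j) = (?G ** (g - mat ?c))$j$j - (?G ** (g - mat ?c))$i$i"
      using entry[of i i] entry[of j j] by (simp add: algebra_simps)
    then have "?c * (?G$i$i - ?G$j$j) \<in> I"
      using GN I ideal_diff unfolding entries_in_def by metis
    then show "?G$i$i - ?G$j$j \<in> I" by (rule cancel)
  qed
qed

lemma principal_congruence_one: "is_ideal I \<Longrightarrow> mat 1 \<in> principal_congruence I"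
  by (simp add: principal_congruence_def entries_in_def ideal_zero)

lemma principal_congruence_mult:
  assumes I: "is_ideal I" and x: "x \<in> principal_congruence I" and y: "y \<in> principal_congruence I"
  shows "x ** y \<in> principal_congruence I"
proof -
  have eq: "x ** y - mat 1 = (x - mat 1) ** (y - mat 1) + (x - mat 1) + (y - mat 1)"
    by (simp add: matrix_mult_diff_ldistrib matrix_mult_diff_rdistrib algebra_simps)
  have "entries_in I (x ** y - mat 1)"
    unfolding eq using x y
    by (intro entries_in_add[OF I] entries_in_mult_left[OF I]) (auto simp: principal_congruence_def)
  then show ?thesis using x y by (simp add: principal_congruence_def GL_mult)
qed

lemma principal_congruence_minv:
  fixes x :: "'a::comm_ring_1^'n::finite^'n"
  assumes I: "is_ideal I" and x: "x \<in> principal_congruence I"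
  shows "minv x \<in> principal_congruence I"
proof -
  have xG: "x \<in> GL" using x by (simp add: principal_congruence_def)
  have eq: "minv x - mat 1 = mat 0 - minv x ** (x - mat 1)"
    using xG by (simp add: matrix_mult_diff_ldistrib GL_simps)
  have "entries_in I (mat 0 :: 'a^'n^'n)"
    by (simp add: entries_in_def mat_def ideal_zero[OF I])
  moreover have "entries_in I (minv x ** (x - mat 1))"
    using x by (intro entries_in_mult_left[OF I]) (simp add: principal_congruence_def)
  ultimately have "entries_in I (minv x - mat 1)"
    unfolding eq by (rule entries_in_diff[OF I])
  then show ?thesis using xG by (simp add: principal_congruence_def GL_minv)
qed

lemma gen_subgroup_principal_congruence:
  assumes "is_ideal I" "S \<subseteq> principal_congruence I" "x \<in> gen_subgroup S"
  shows "x \<in> principal_congruence I"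
  using assms(3)
  by (induction x rule: gen_subgroup.induct)
    (use assms(1,2) in \<open>auto intro: principal_congruence_one principal_congruence_mult principal_congruence_minv\<close>)

lemma E_ideal_principal_congruence:
  fixes x :: "'a::comm_ring_1^'n::finite^'n"
  assumes I: "is_ideal I" and x: "x \<in> E_ideal I"
  shows "x \<in> principal_congruence I"
proof (rule gen_subgroup_principal_congruence[OF I _ x[unfolded E_ideal_def]])
  show "{transvection i j \<xi> |i j \<xi>. i \<noteq> j \<and> \<xi> \<in> I} \<subseteq> (principal_congruence I :: ('a^'n^'n) set)"
  proof clarify
    fix i j :: 'n and \<xi> assume "i \<noteq> j" "\<xi> \<in> I"
    then show "transvection i j \<xi> \<in> principal_congruence I"
      using I by (auto simp: principal_congruence_def entries_in_def transvection_GL)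
        (auto simp: transvection_def ideal_zero)
  qed
qed

lemma E_rel_principal_congruence:
  fixes x :: "'a::comm_ring_1^'n::finite^'n"
  assumes I: "is_ideal I" and x: "x \<in> E_rel I"
  shows "x \<in> principal_congruence I"
proof (rule gen_subgroup_principal_congruence[OF I _ x[unfolded E_rel_def]])
  show "{g ** x ** minv g |g x. g \<in> E_ideal UNIV \<and> x \<in> E_ideal I} \<subseteq> (principal_congruence I :: ('a^'n^'n) set)"
  proof clarify
    fix g x :: "'a^'n^'n" assume g: "g \<in> E_ideal UNIV" and x: "x \<in> E_ideal I"
    have gG: "g \<in> GL" using g by (rule E_ideal_GL)
    have xl: "x \<in> principal_congruence I" using I x by (rule E_ideal_principal_congruence)
    have "g ** x ** minv g - mat 1 = g ** (x - mat 1) ** minv g"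
      using gG by (simp add: matrix_mult_diff_ldistrib matrix_mult_diff_rdistrib GL_simps)
    moreover have "entries_in I (g ** (x - mat 1) ** minv g)"
      using xl unfolding principal_congruence_def
      by (intro entries_in_mult_left[OF I] entries_in_mult_right[OF I]) simp
    ultimately show "g ** x ** minv g \<in> principal_congruence I"
      using xl gG by (simp add: principal_congruence_def GL_mult GL_minv)
  qed
qed

text \<open>Since \<open>[x, y] - e = ((x - e)(y - e) - (y - e)(x - e)) x\<^sup>-\<^sup>1 y\<^sup>-\<^sup>1\<close>.\<close>
lemma mcomm_principal_congruence_ideal_quot:
  assumes B: "is_ideal B"
    and x: "x \<in> principal_congruence (ideal_quot B A)" and y: "y \<in> principal_congruence A"
  shows "mcomm x y \<in> principal_congruence B"
proof -
  have G: "x \<in> GL" "y \<in> GL" using x y by (auto simp: principal_congruence_def)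
  have "mcomm x y - mat 1 = ((x - mat 1) ** (y - mat 1) - (y - mat 1) ** (x - mat 1)) ** (minv x ** minv y)"
    using G unfolding mcomm_def
    by (simp add: matrix_mult_diff_ldistrib matrix_mult_diff_rdistrib GL_simps algebra_simps)
  moreover have "entries_in B ((x - mat 1) ** (y - mat 1) - (y - mat 1) ** (x - mat 1))"
    using x y B by (intro entries_in_diff[OF B] entries_in_mult_ideal_quot)
      (auto simp: principal_congruence_def)
  ultimately show ?thesis
    using G B by (simp add: principal_congruence_def mcomm_GL entries_in_mult_right)
qed

lemma comm_subgroup_principal_congruence:
  fixes x :: "'a::comm_ring_1^'n::finite^'n"
  assumes A: "is_ideal A" and B: "is_ideal B"
    and x: "x \<in> comm_subgroup (E_rel (ideal_quot B A)) (E_rel A)"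
  shows "x \<in> principal_congruence B"
proof (rule gen_subgroup_principal_congruence[OF B _ x[unfolded comm_subgroup_def]])
  have Q: "is_ideal (ideal_quot B A)" using B by (rule is_ideal_ideal_quot)
  show "{mcomm f h |f h. f \<in> E_rel (ideal_quot B A) \<and> h \<in> E_rel A} \<subseteq> (principal_congruence B :: ('a^'n^'n) set)"
  proof clarify
    fix f h :: "'a^'n^'n" assume f: "f \<in> E_rel (ideal_quot B A)" and h: "h \<in> E_rel A"
    show "mcomm f h \<in> principal_congruence B"
      using mcomm_principal_congruence_ideal_quot[OF B
          E_rel_principal_congruence[OF Q f] E_rel_principal_congruence[OF A h]] .
  qed
qed

section \<open>Vectors orthogonal to a row\<close>

definition perp_vec :: "'a::comm_ring_1^'n::finite \<Rightarrow> 'n \<Rightarrow> 'n \<Rightarrow> 'a^'n" where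
  "perp_vec u k l = axis l (u$k) - axis k (u$l)"

lemma vdot_perp_vec: "vdot u (perp_vec u k l) = 0"
  by (simp add: perp_vec_def vdot_diff_right vdot_axis_right mult.commute)

lemma perp_vec_nth: "perp_vec u k l $ m = (if m = l then u$k else 0) - (if m = k then u$l else 0)"
  by (simp add: perp_vec_def axis_def)

lemma perp_vec_nth_other: "h \<noteq> k \<Longrightarrow> h \<noteq> l \<Longrightarrow> perp_vec u k l $ h = 0"
  by (simp add: perp_vec_nth)

lemma scale_perp_vec: "b *s perp_vec u k l = axis l (b * u$k) + axis k (- (b * u$l))"
  by (simp add: vec_eq_iff perp_vec_def axis_def vector_scalar_mult_def)

lemma vdot_perp_vec_off_axis:
  "h \<noteq> k \<Longrightarrow> h \<noteq> l \<Longrightarrow> vdot (u - axis h (u$h)) (perp_vec u k l) = 0"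
  by (simp add: vdot_diff_left vdot_perp_vec vdot_axis_left perp_vec_nth_other)

lemma sum_perp_vec:
  fixes u c p :: "'a::comm_ring_1^'n::finite"
  assumes uc: "vdot u c = 1" and up: "vdot u p = 0"
  shows "(\<Sum>(k,l)\<in>UNIV\<times>UNIV. (c$k * p$l) *s perp_vec u k l) = p"
proof -
  have "(\<Sum>(k,l)\<in>UNIV\<times>UNIV. (c$k * p$l) *s perp_vec u k l) $ m = p $ m" for m
  proof -
    have "(\<Sum>(k,l)\<in>UNIV\<times>UNIV. (c$k * p$l) *s perp_vec u k l) $ m
        = (\<Sum>k\<in>UNIV. \<Sum>l\<in>UNIV. (c$k * p$l) * perp_vec u k l $ m)"
      by (simp add: sum_component case_prod_beta sum.cartesian_product)
    also have "\<dots> = (\<Sum>k\<in>UNIV. \<Sum>l\<in>UNIV. (if l = m then c$k * p$m * u$k else 0)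
                       - (if k = m then c$m * p$l * u$l else 0))"
      by (intro sum.cong refl) (auto simp: perp_vec_nth algebra_simps)
    also have "\<dots> = (\<Sum>k\<in>UNIV. c$k * p$m * u$k) - (\<Sum>l\<in>UNIV. c$m * p$l * u$l)"
      by (simp add: sum_subtractf if_distrib[of "\<lambda>x. \<Sum>l\<in>UNIV. x"]
          sum.swap[of "\<lambda>k l. if k = m then _ l else 0"])
    also have "\<dots> = p$m * vdot u c - c$m * vdot u p"
      by (simp add: vdot_def sum_distrib_left algebra_simps)
    finally show ?thesis using uc up by simp
  qed
  then show ?thesis by (simp add: vec_eq_iff)
qed

lemma esd_split_axis:
  assumes "h \<noteq> k" "h \<noteq> l"
  shows "esd (b *s perp_vec u k l) u
           = esd (b *s perp_vec u k l) (u - axis h (u$h)) ** esd (b *s perp_vec u k l) (axis h (u$h))"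
  using assms by (simp add: esd_mult_same_col vdot_scale_right vdot_perp_vec_off_axis)

lemma esd_perp_vec_axis_eq:
  assumes "h \<noteq> i"
  shows "esd (a *s perp_vec u j i) (axis h 1)
           = transvection j h (- (a * u$i)) ** transvection i h (a * u$j)"
proof -
  have "a *s perp_vec u j i = axis j (- (a * u$i)) + axis i (a * u$j)"
    by (simp add: scale_perp_vec add.commute)
  then show ?thesis
    using assms by (simp add: esd_mult_same_row vdot_axis_left transvection_eq_esd)
qed

lemma esd_axis_row_split:
  assumes "w$h = 0" "h \<noteq> j"
  shows "esd (axis h 1) w = esd (axis h 1) (w - axis j (w$j)) ** transvection h j (w$j)"
proof -
  have "esd (axis h 1) w = esd (axis h 1) ((w - axis j (w$j)) + axis j (w$j))" by simp
  also have "\<dots> = esd (axis h 1) (w - axis j (w$j)) ** esd (axis h 1) (axis j (w$j))"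
    using assms by (subst esd_mult_same_col) (simp_all add: vdot_axis_right)
  finally show ?thesis by (simp add: esd_axis_axis)
qed

lemma scale_sum_vec: "(c::'a::comm_ring_1) *s (\<Sum>x\<in>S. f x) = (\<Sum>x\<in>S. c *s f x)"
  by (simp add: vec_eq_iff vector_scalar_mult_def sum_component sum_distrib_left)

section \<open>Commutators of elementary and congruence matrices\<close>

lemma mcomm_transvection_eq:
  fixes g :: "'a::comm_ring_1^'n::finite^'n"
  assumes g: "g \<in> GL" and ij: "i \<noteq> j"
  shows "mcomm (transvection i j a) g
           = transvection i j a ** esd ((- a) *s (\<chi> k. g$k$i)) (minv g $ j)"
proof -
  have "mcomm (transvection i j a) g = transvection i j a ** (g ** esd (axis i (- a)) (axis j 1) ** minv g)"
    unfolding mcomm_def minv_transvection[OF ij] by (simp add: transvection_eq_esd matrix_mul_assoc)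
  also have "g ** esd (axis i (- a)) (axis j 1) ** minv g = esd (g *v axis i (- a)) (axis j 1 v* minv g)"
    using g by (simp add: conj_esd GL_minv_right)
  also have "\<dots> = esd ((- a) *s (\<chi> k. g$k$i)) (minv g $ j)"
    by (simp add: matrix_vector_mult_axis axis_vector_matrix_mult)
  finally show ?thesis .
qed

text \<open>The diagonal of a matrix in \<open>C(n,R,I)\<close> is scalar modulo \<open>I\<close>, and so is that of its inverse;
  hence \<open>g\<^sub>i\<^sub>i g\<^sub>j\<^sub>j (g\<^sup>-\<^sup>1)\<^sub>j\<^sub>j\<^sup>2 \<equiv> 1\<close>.\<close>
lemma full_congruence_diag_minv_sq:
  fixes g :: "'a::comm_ring_1^'n::finite^'n"
  assumes I: "is_ideal I" and g: "g \<in> full_congruence I" and ij: "i \<noteq> j"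
  shows "1 - g$j$j * g$i$i * (minv g $ j $ j * minv g $ j $ j) \<in> I"
proof -
  let ?G = "minv g"
  define \<sigma> where "\<sigma> = ?G$j$j * g$j$j"
  have "1 = (?G ** g)$j$j"
    using g by (simp add: full_congruence_GL GL_minv_left mat_def)
  also have "\<dots> = \<sigma> + (\<Sum>k\<in>UNIV - {j}. ?G$j$k * g$k$j)"
    by (simp add: matrix_matrix_mult_def \<sigma>_def sum.remove)
  finally have "1 - \<sigma> = (\<Sum>k\<in>UNIV - {j}. ?G$j$k * g$k$j)"
    by (simp add: algebra_simps)
  moreover have "(\<Sum>k\<in>UNIV - {j}. ?G$j$k * g$k$j) \<in> I"
    using full_congruence_minv[OF I g] I
    by (intro ideal_sum) (auto simp: full_congruence_def intro: ideal_mult_right)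
  ultimately have \<sigma>: "1 - \<sigma> \<in> I" by simp
  have "(g$i$i - g$j$j) * ?G$j$j \<in> I"
    using g ij I by (auto simp: full_congruence_def intro: ideal_mult_right)
  moreover have "1 - g$j$j * g$i$i * (?G$j$j * ?G$j$j)
      = (1 - \<sigma>) * (1 + \<sigma>) - \<sigma> * ((g$i$i - g$j$j) * ?G$j$j)"
    by (simp add: \<sigma>_def algebra_simps)
  ultimately show ?thesis
    using \<sigma> I by (metis ideal_diff ideal_mult_left ideal_mult_right)
qed

lemma transvection_commutator_nth:
  fixes g :: "'a::comm_ring_1^'n::finite^'n"
  shows "(transvection i j a ** g - g ** transvection i j a)$k$l
           = (if k = i then a * g$j$l else 0) - g$k$i * a * (if l = j then 1 else 0)"
proof -
  have "transvection i j a ** g = g + outer_prod (axis i a) (g$j)"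
    by (simp add: transvection_eq_esd esd_def matrix_mult_add_rdistrib outer_prod_matrix_mult
        axis_vector_matrix_mult)
  moreover have "g ** transvection i j a = g + outer_prod (a *s (\<chi> k. g$k$i)) (axis j 1)"
    by (simp add: transvection_eq_esd esd_def matrix_add_ldistrib matrix_mult_outer_prod
        matrix_vector_mult_axis)
  ultimately show ?thesis
    by (simp add: outer_prod_def axis_def vector_scalar_mult_def algebra_simps)
qed

text \<open>Uses \<open>[x y, g] = x [y, g] x\<^sup>-\<^sup>1 \<cdot> [x, g]\<close> and normality of the mixed commutator subgroup
  under \<open>E(n,R)\<close>.\<close>
lemma mcomm_gen_subgroup_comm_subgroup:
  fixes g :: "'a::comm_ring_1^'n::finite^'n"
  assumes x: "x \<in> gen_subgroup S" and S: "S \<subseteq> E_ideal UNIV" and g: "g \<in> GL"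
    and gens: "\<And>s. s \<in> S \<Longrightarrow> mcomm s g \<in> comm_subgroup (E_rel I) (E_rel J)"
  shows "mcomm x g \<in> comm_subgroup (E_rel I) (E_rel J)"
proof -
  have E: "y \<in> E_ideal UNIV" if "y \<in> gen_subgroup S" for y
    using that S unfolding E_ideal_def by (rule gen_subgroup_subset)
  show ?thesis
    using x
  proof (induction x rule: gen_subgroup.induct)
    case one
    have "mcomm (mat 1) g = mat 1" using g unfolding mcomm_def by (simp add: GL_simps)
    then show ?case by (simp add: comm_subgroup_one)
  next
    case (base s)
    then show ?case by (rule gens)
  next
    case (mult x y)
    have "mcomm (x ** y) g = (x ** mcomm y g ** minv x) ** mcomm x g"
      using E[OF mult.hyps(1)] E[OF mult.hyps(2)] g
      unfolding mcomm_def by (simp add: E_ideal_GL GL_simps)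
    then show ?case
      using mult.IH E[OF mult.hyps(1)] by (simp add: comm_subgroup_mult comm_subgroup_E_rel_conj)
  next
    case (inv x)
    have "mcomm (minv x) g = minv x ** minv (mcomm x g) ** minv (minv x)"
      using E[OF inv.hyps] g unfolding mcomm_def by (simp add: E_ideal_GL GL_simps)
    then show ?case
      using inv.IH E[OF inv.hyps]
      by (simp add: comm_subgroup_minv comm_subgroup_E_rel_conj E_ideal_minv)
  qed
qed

context
  fixes I J :: "'a::comm_ring_1 set"
  assumes I: "is_ideal I" and J: "is_ideal J"
begin

lemma esd_perp_vec_axis_comm_subgroup:
  fixes u :: "'a^'n::finite"
  assumes card3: "CARD('n) \<ge> 3" and hk: "h \<noteq> k" "h \<noteq> l" and a: "a \<in> J" and r: "r * u$h \<in> I"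
  shows "esd ((a * r) *s perp_vec u k l) (axis h (u$h)) \<in> comm_subgroup (E_rel I) (E_rel J)"
proof -
  have "esd ((a * r) *s perp_vec u k l) (axis h (u$h))
      = esd (axis l (a * r * u$k)) (axis h (u$h)) ** esd (axis k (- (a * r * u$l))) (axis h (u$h))"
    using hk by (simp add: scale_perp_vec esd_mult_same_row vdot_axis_left)
  also have "\<dots> = transvection l h (a * (r * u$h * u$k)) ** transvection k h (a * (- (r * u$h * u$l)))"
    by (simp add: esd_axis_axis algebra_simps)
  finally show ?thesis
    using hk r I a card3
    by (metis comm_subgroup_mult transvection_comm_subgroup ideal_mult_right ideal_neg)
qed

lemma esd_perp_vec_off_axis_comm_subgroup:
  fixes u :: "'a^'n::finite"
  assumes hk: "h \<noteq> k" "h \<noteq> l" and a: "a \<in> J" and r: "r \<in> I"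
  shows "esd ((a * r) *s perp_vec u k l) (u - axis h (u$h)) \<in> comm_subgroup (E_rel I) (E_rel J)"
proof -
  let ?x = "esd (a *s perp_vec u k l) (axis h 1)" and ?y = "esd (axis h 1) (r *s (u - axis h (u$h)))"
  have "mcomm ?x ?y = esd (a *s perp_vec u k l) (r *s (u - axis h (u$h)))"
    by (rule mcomm_esd_esd)
      (use hk in \<open>simp_all add: vdot_scale_left vdot_scale_right vdot_perp_vec_off_axis
        perp_vec_nth_other del: vector_ssub_ldistrib\<close>)
  then have eq: "esd ((a * r) *s perp_vec u k l) (u - axis h (u$h)) = mcomm ?x ?y"
    by (simp add: esd_scale del: vector_ssub_ldistrib)
  have "?x \<in> E_rel J"
    by (intro E_ideal_E_rel esd_col_E_ideal) (use hk a J in \<open>auto simp: perp_vec_nth_other intro: ideal_mult_right\<close>)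
  moreover have "?y \<in> E_rel I"
    by (intro E_ideal_E_rel esd_row_E_ideal) (use r I in \<open>auto simp: vector_scalar_mult_def intro: ideal_mult_right\<close>)
  ultimately show ?thesis unfolding eq by (rule mcomm_comm_subgroup_swap)
qed

lemma esd_perp_vec_comm_subgroup:
  fixes u :: "'a^'n::finite"
  assumes card3: "CARD('n) \<ge> 3" and a: "a \<in> J" and r: "r \<in> I"
  shows "esd ((a * r) *s perp_vec u k l) u \<in> comm_subgroup (E_rel I) (E_rel J)"
proof -
  obtain h :: 'n where hk: "h \<noteq> k" "h \<noteq> l" using exists_third_index[OF card3] by blast
  show ?thesis
    unfolding esd_split_axis[OF hk]
    using esd_perp_vec_off_axis_comm_subgroup[OF hk a r]
      esd_perp_vec_axis_comm_subgroup[OF card3 hk a ideal_mult_right[OF I r]]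
    by (rule comm_subgroup_mult)
qed

text \<open>The factors are \<open>x = t\<^sub>j\<^sub>h(-a u\<^sub>i) t\<^sub>i\<^sub>h(a u\<^sub>j)\<close> and \<open>y = (e + e\<^sub>h w') t\<^sub>h\<^sub>j(r u\<^sub>j)\<close>; the merged
  transvection is \<open>t\<^sub>i\<^sub>j(a (1 + r u\<^sub>j\<^sup>2))\<close>, a mixed commutator since \<open>1 + r u\<^sub>j\<^sup>2 \<in> I\<close>.\<close>
lemma transvection_mult_mcomm_comm_subgroup:
  fixes u :: "'a^'n::finite"
  assumes card3: "CARD('n) \<ge> 3" and hi: "h \<noteq> i" "h \<noteq> j" and ij: "i \<noteq> j" and a: "a \<in> J"
    and uI: "\<And>m. m \<noteq> j \<Longrightarrow> u$m \<in> I" and unit: "1 + r * (u$j * u$j) \<in> I"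
  shows "transvection i j a
           ** mcomm (esd (a *s perp_vec u j i) (axis h 1)) (esd (axis h 1) (r *s (u - axis h (u$h))))
         \<in> comm_subgroup (E_rel I) (E_rel J)"
proof -
  let ?H = "comm_subgroup (E_rel I) (E_rel J) :: ('a^'n^'n) set"
  define w where "w = r *s (u - axis h (u$h))"
  define w' where "w' = w - axis j (w$j)"
  define x1 where "x1 = (transvection j h (- (a * u$i)) :: 'a^'n^'n)"
  define x2 where "x2 = (transvection i h (a * u$j) :: 'a^'n^'n)"
  define y1 where "y1 = (esd (axis h 1) w' :: 'a^'n^'n)"
  define y2 where "y2 = (transvection h j (w$j) :: 'a^'n^'n)"
  define \<gamma> where "\<gamma> = a * u$j * w$j"
  have wh: "w$h = 0" and w'h: "w'$h = 0" and wj: "w$j = r * u$j" and w'i: "w'$i = r * u$i"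
    using hi ij by (simp_all add: w'_def w_def vector_scalar_mult_def)
  have w'I: "w'$m \<in> I" for m
    using uI I by (cases "m = j"; cases "m = h")
      (auto simp: w'_def w_def vector_scalar_mult_def ideal_zero intro: ideal_mult_left)
  have GL: "x1 \<in> GL" "x2 \<in> GL" "y1 \<in> GL" "y2 \<in> GL"
    unfolding x1_def x2_def y1_def y2_def using hi ij w'h
    by (auto intro: transvection_GL esd_GL simp: vdot_axis_right)
  have x2y2: "mcomm x2 y2 = transvection i j \<gamma>"
    unfolding x2_def y2_def \<gamma>_def using hi ij by (intro mcomm_transvection_transvection) auto
  have y1: "y1 ** transvection i j \<gamma> ** minv y1 = transvection i j \<gamma> ** transvection h j (w'$i * \<gamma>)"
    unfolding y1_def using w'h hi ij by (intro conj_transvection_by_row_esd) auto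
  have eq: "transvection i j a ** mcomm (x1 ** x2) (y1 ** y2)
      = (transvection i j a ** (x1 ** mcomm x2 y1) ** minv (transvection i j a))
        ** transvection i j (a + \<gamma>) ** transvection h j (w'$i * \<gamma>) ** ((y1 ** y2) ** minv x1 ** minv (y1 ** y2))"
    by (rule transvection_mult_mcomm_mult_mult[OF GL ij x2y2 y1])
  have "x1 \<in> ?H"
    unfolding x1_def using transvection_comm_subgroup[OF card3 _ ideal_neg[OF I uI[OF ij]] a] hi by simp
  moreover have "mcomm x2 y1 \<in> ?H"
  proof (rule mcomm_comm_subgroup_swap)
    show "x2 \<in> E_rel J"
      unfolding x2_def using hi ij a J by (intro E_ideal_E_rel transvection_E_ideal) (auto intro: ideal_mult_right)
    show "y1 \<in> E_rel I"
      unfolding y1_def by (intro E_ideal_E_rel esd_row_E_ideal w'h w'I)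
  qed
  moreover have "transvection i j (a + \<gamma>) \<in> ?H"
    using transvection_comm_subgroup[OF card3 ij unit a] by (simp add: \<gamma>_def wj algebra_simps)
  moreover have "transvection h j (w'$i * \<gamma>) \<in> ?H"
  proof -
    have q: "r * (r * (u$i * (u$j * u$j))) \<in> I"
      using uI[OF ij] I by (metis ideal_mult_left ideal_mult_right)
    have "w'$i * \<gamma> = a * (r * (r * (u$i * (u$j * u$j))))"
      by (simp add: \<gamma>_def wj w'i algebra_simps)
    then show ?thesis using transvection_comm_subgroup[OF card3 hi(2) q a] by simp
  qed
  moreover have "transvection i j a \<in> E_ideal UNIV" "y1 ** y2 \<in> E_ideal UNIV"
    unfolding y1_def y2_def w'_def using ij wh hi
    by (auto simp flip: esd_axis_row_split intro: transvection_E_ideal esd_row_E_ideal)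
  ultimately show ?thesis
    unfolding esd_perp_vec_axis_eq[OF hi(1)] w_def[symmetric] esd_axis_row_split[OF wh hi(2)]
    unfolding x1_def[symmetric] x2_def[symmetric] y1_def[symmetric] w'_def[symmetric] y2_def[symmetric] eq
    by (intro comm_subgroup_mult comm_subgroup_E_rel_conj comm_subgroup_minv)
qed

lemma transvection_mult_esd_perp_vec_comm_subgroup:
  fixes u :: "'a^'n::finite"
  assumes card3: "CARD('n) \<ge> 3" and ij: "i \<noteq> j" and a: "a \<in> J"
    and uI: "\<And>m. m \<noteq> j \<Longrightarrow> u$m \<in> I" and unit: "1 + r * (u$j * u$j) \<in> I"
  shows "transvection i j a ** esd ((a * r) *s perp_vec u j i) u \<in> comm_subgroup (E_rel I) (E_rel J)"
proof -
  obtain h :: 'n where hi: "h \<noteq> i" "h \<noteq> j" using exists_third_index[OF card3] by blast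
  have eq: "esd ((a * r) *s perp_vec u j i) (u - axis h (u$h))
      = mcomm (esd (a *s perp_vec u j i) (axis h 1)) (esd (axis h 1) (r *s (u - axis h (u$h))))"
    by (subst mcomm_esd_esd) (use hi in \<open>simp_all add: vdot_scale_left vdot_scale_right
        vdot_perp_vec_off_axis perp_vec_nth_other esd_scale del: vector_ssub_ldistrib\<close>)
  have "transvection i j a ** esd ((a * r) *s perp_vec u j i) (u - axis h (u$h))
      \<in> comm_subgroup (E_rel I) (E_rel J)"
    unfolding eq using card3 hi ij a uI unit by (rule transvection_mult_mcomm_comm_subgroup)
  moreover have "esd ((a * r) *s perp_vec u j i) (axis h (u$h)) \<in> comm_subgroup (E_rel I) (E_rel J)"
    using card3 hi(2) hi(1) a ideal_mult_left[OF I uI[OF hi(2)], of r]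
    by (rule esd_perp_vec_axis_comm_subgroup)
  ultimately show ?thesis
    unfolding esd_split_axis[OF hi(2) hi(1)] using comm_subgroup_mult by (metis matrix_mul_assoc)
qed

lemma mcomm_transvection_full_congruence:
  fixes g :: "'a^'n::finite^'n"
  assumes card3: "CARD('n) \<ge> 3" and g: "g \<in> full_congruence I" and ij: "i \<noteq> j" and a: "a \<in> J"
  shows "mcomm (transvection i j a) g \<in> comm_subgroup (E_rel I) (E_rel J)"
proof -
  let ?H = "comm_subgroup (E_rel I) (E_rel J) :: ('a^'n^'n) set"
  let ?t = "transvection i j a :: 'a^'n^'n"
  define p where "p = (\<chi> k. g$k$i)"
  define c where "c = (\<chi> k. g$k$j)"
  define u where "u = minv g $ j"
  define f where "f = (\<lambda>(k, l). ((- a) * (c$k * p$l)) *s perp_vec u k l)"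
  let ?S = "UNIV \<times> UNIV - {(j, i)}"
  have gG: "g \<in> GL" using g by (rule full_congruence_GL)
  have "vdot u c = (minv g ** g)$j$j" "vdot u p = (minv g ** g)$j$i"
    by (simp_all add: vdot_def u_def c_def p_def matrix_matrix_mult_def)
  then have uc: "vdot u c = 1" and up: "vdot u p = 0"
    using GL_minv_left[OF gG] ij by (simp_all add: mat_def)
  have uI: "u$m \<in> I" if "m \<noteq> j" for m
    using full_congruence_minv[OF I g] that by (auto simp: u_def full_congruence_def)
  have orth: "vdot u (f x) = 0" for x
    by (cases x) (simp add: f_def vdot_scale_right vdot_perp_vec)
  have "(- a) *s p = (- a) *s (\<Sum>(k, l)\<in>UNIV \<times> UNIV. (c$k * p$l) *s perp_vec u k l)"
    by (simp only: sum_perp_vec[OF uc up])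
  also have "\<dots> = (\<Sum>x\<in>UNIV \<times> UNIV. f x)"
    unfolding scale_sum_vec f_def
    by (rule sum.cong) (auto simp: vector_scalar_mult_def vec_eq_iff mult.assoc)
  also have "\<dots> = f (j, i) + (\<Sum>x\<in>?S. f x)"
    by (simp add: sum.remove)
  finally have "esd ((- a) *s p) u = esd (f (j, i)) u ** esd (\<Sum>x\<in>?S. f x) u"
    by (simp add: esd_mult_same_row vdot_sum_right orth)
  then have "mcomm ?t g = (?t ** esd (f (j, i)) u) ** esd (\<Sum>x\<in>?S. f x) u"
    using mcomm_transvection_eq[OF gG ij, of a] by (simp add: p_def u_def matrix_mul_assoc)
  moreover have "?t ** esd (f (j, i)) u \<in> ?H"
  proof -
    have "1 + - (c$j * p$i) * (u$j * u$j) \<in> I"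
      using full_congruence_diag_minv_sq[OF I g ij] by (simp add: c_def p_def u_def)
    from transvection_mult_esd_perp_vec_comm_subgroup[OF card3 ij a uI this]
    show ?thesis by (simp add: f_def)
  qed
  moreover have "esd (\<Sum>x\<in>?S. f x) u \<in> ?H"
  proof (rule esd_sum_col_mem[OF comm_subgroup_one comm_subgroup_mult orth])
    fix x assume "x \<in> ?S"
    then obtain k l where x: "x = (k, l)" and kl: "k \<noteq> j \<or> l \<noteq> i" by (cases x) auto
    have "c$k \<in> I \<or> p$l \<in> I"
      using kl g unfolding c_def p_def full_congruence_def by auto
    then have "- (c$k * p$l) \<in> I"
      using I by (metis ideal_neg ideal_mult_left ideal_mult_right)
    from esd_perp_vec_comm_subgroup[OF card3 a this]
    show "esd (f x) u \<in> ?H" by (simp add: x f_def)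
  qed
  ultimately show ?thesis by (simp add: comm_subgroup_mult)
qed

lemma mcomm_E_rel_full_congruence:
  fixes g :: "'a^'n::finite^'n"
  assumes card3: "CARD('n) \<ge> 3" and f: "f \<in> E_rel J" and g: "g \<in> full_congruence I"
  shows "mcomm f g \<in> comm_subgroup (E_rel I) (E_rel J)"
proof -
  have E: "mcomm x g' \<in> comm_subgroup (E_rel I) (E_rel J)"
    if x: "x \<in> E_ideal J" and g': "g' \<in> full_congruence I" for x and g' :: "'a^'n^'n"
    using x[unfolded E_ideal_def] _ full_congruence_GL[OF g']
  proof (rule mcomm_gen_subgroup_comm_subgroup)
    show "{transvection i j \<xi> |i j \<xi>. i \<noteq> j \<and> \<xi> \<in> J} \<subseteq> (E_ideal UNIV :: ('a^'n^'n) set)"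
      by (auto intro: transvection_E_ideal)
  qed (auto intro!: mcomm_transvection_full_congruence[OF card3 g'])
  show ?thesis
    using f[unfolded E_rel_def] _ full_congruence_GL[OF g]
  proof (rule mcomm_gen_subgroup_comm_subgroup)
    show "{h ** x ** minv h |h x. h \<in> E_ideal UNIV \<and> x \<in> E_ideal J} \<subseteq> (E_ideal UNIV :: ('a^'n^'n) set)"
    proof clarify
      fix h x :: "'a^'n^'n" assume h: "h \<in> E_ideal UNIV" and x: "x \<in> E_ideal J"
      show "h ** x ** minv h \<in> E_ideal UNIV"
        using E_ideal_mult[OF E_ideal_mult[OF h E_ideal_subset_E_UNIV[OF x]] E_ideal_minv[OF h]] .
    qed
    fix s :: "'a^'n^'n" assume "s \<in> {h ** x ** minv h |h x. h \<in> E_ideal UNIV \<and> x \<in> E_ideal J}"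
    then obtain h x where s: "s = h ** x ** minv h" and h: "h \<in> E_ideal UNIV" and x: "x \<in> E_ideal J"
      by blast
    have G: "h \<in> GL" "x \<in> GL" "g \<in> GL" using h x g by (auto intro: E_ideal_GL full_congruence_GL)
    have "mcomm s g = h ** mcomm x (minv h ** g ** h) ** minv h"
      using G unfolding s mcomm_def by (simp add: GL_simps)
    moreover have "minv h ** g ** h \<in> full_congruence I"
      using full_congruence_conj[OF I GL_minv[OF G(1)] g] G by (simp add: GL_simps)
    ultimately show "mcomm s g \<in> comm_subgroup (E_rel I) (E_rel J)"
      using comm_subgroup_E_rel_conj[OF h E[OF x]] by simp
  qed
qed

end

lemma centraliser_mod_subset_full_congruence:
  fixes g :: "'a::comm_ring_1^'n::finite^'n"
  assumes A: "is_ideal A" and B: "is_ideal B"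
    and g: "g \<in> centraliser_mod (E_rel A) (comm_subgroup (E_rel (ideal_quot B A)) (E_rel A))"
  shows "g \<in> full_congruence (ideal_quot B A)"
proof -
  have gG: "g \<in> GL" using g by (simp add: centraliser_mod_def)
  have tB: "(transvection i j a ** g - g ** transvection i j a)$k$l \<in> B"
    if ij: "i \<noteq> j" and a: "a \<in> A" for i j a k l
  proof -
    let ?t = "transvection i j a :: 'a^'n^'n"
    have "?t \<in> E_rel A" using ij a by (intro E_ideal_E_rel transvection_E_ideal)
    then have "mcomm ?t g \<in> principal_congruence B"
      using g by (intro comm_subgroup_principal_congruence[OF A B]) (simp add: centraliser_mod_def)
    then have "entries_in B ((mcomm ?t g - mat 1) ** (g ** ?t))"
      by (intro entries_in_mult_right[OF B]) (simp add: principal_congruence_def)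
    moreover have "?t ** g - g ** ?t = (mcomm ?t g - mat 1) ** (g ** ?t)"
      using ij gG unfolding mcomm_def by (simp add: matrix_mult_diff_rdistrib transvection_GL GL_simps)
    ultimately show ?thesis by (simp add: entries_in_def)
  qed
  show ?thesis unfolding full_congruence_def
  proof (intro CollectI conjI allI impI gG)
    fix x y :: 'n assume xy: "x \<noteq> y"
    show "g$x$y \<in> ideal_quot B A" unfolding ideal_quot_def
    proof (intro CollectI ballI)
      fix a assume "a \<in> A"
      from tB[OF xy[symmetric] this, of y y] have "a * g$x$y \<in> B"
        by (subst (asm) transvection_commutator_nth) (use xy in simp)
      then show "g$x$y * a \<in> B" by (simp add: mult.commute)
    qed
    show "g$x$x - g$y$y \<in> ideal_quot B A" unfolding ideal_quot_def
    proof (intro CollectI ballI)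
      fix a assume "a \<in> A"
      from tB[OF xy this, of x y] have "a * g$y$y - g$x$x * a \<in> B"
        by (subst (asm) transvection_commutator_nth) (use xy in simp)
      then have "- (a * g$y$y - g$x$x * a) \<in> B" by (rule ideal_neg[OF B])
      then show "(g$x$x - g$y$y) * a \<in> B" by (simp add: algebra_simps)
    qed
  qed
qed

theorem theorem2:
  fixes A B :: "'a::comm_ring_1 set"
  assumes "is_ideal A" and "is_ideal B" and "CARD('n::finite) \<ge> 3"
  shows "(centraliser_mod (E_rel A :: ('a^'n^'n) set)
            (comm_subgroup (E_rel (ideal_quot B A)) (E_rel A)))
         = full_congruence (ideal_quot B A)"
proof
  show "centraliser_mod (E_rel A) (comm_subgroup (E_rel (ideal_quot B A)) (E_rel A))
      \<subseteq> (full_congruence (ideal_quot B A) :: ('a^'n^'n) set)"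
    using centraliser_mod_subset_full_congruence[OF assms(1,2)] by blast
  show "full_congruence (ideal_quot B A)
      \<subseteq> centraliser_mod (E_rel A :: ('a^'n^'n) set) (comm_subgroup (E_rel (ideal_quot B A)) (E_rel A))"
    using mcomm_E_rel_full_congruence[OF is_ideal_ideal_quot[OF assms(2)] assms(1,3)]
    by (auto simp: centraliser_mod_def full_congruence_GL)
qed

end
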